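(* Let $\mathfrak g$ be a 4-dimensional real almost abelian Lie algebra admitting an LCS structure. Then $\mathfrak g$ is isomorphic to one of the following Lie algebras (basis $\{e_1,e_2,e_3,e_4\}$, only nonzero brackets listed): $\mathfrak h_3\times\mathbb R$: $[e_1,e_2]=e_3$; $\mathfrak n_4$: $[e_1,e_2]=e_3$, $[e_1,e_3]=e_4$; $\mathfrak r_{3,\lambda}\times\mathbb R$ ($\lambda\in\mathbb R$): $[e_1,e_2]=e_2$, $[e_1,e_3]=\lambda e_3$; $\mathfrak r_{4,\mu,\lambda}$ ($\mu\lambda\neq0$): $[e_1,e_2]=e_2$, $[e_1,e_3]=\mu e_3$, $[e_1,e_4]=\lambda e_4$; $\mathfrak r_3\times\mathbb R$: $[e_1,e_2]=e_2$, $[e_1,e_3]=e_2+e_3$; $\mathfrak r_{4,\lambda}$ ($\lambda\in\mathbb R$): $[e_1,e_2]=e_2$, $[e_1,e_3]=\lambda e_3$, $[e_1,e_4]=e_3+\lambda e_4$; $\mathfrak r_4$: $[e_1,e_2]=e_2$, $[e_1,e_3]=e_2+e_3$, $[e_1,e_4]=e_3+e_4$; $\mathfrak r'_{3,\lambda}\times\mathbb R$ ($\lambda\in\mathbb R$): $[e_1,e_2]=\lambda e_2-e_3$, $[e_1,e_3]=e_2+\lambda e_3$; $\mathfrak r'_{4,\mu,\lambda}$ ($\mu\neq0$, $\lambda\neq0$): $[e_1,e_2]=\mu e_2$, $[e_1,e_3]=\lambda e_3-e_4$, $[e_1,e_4]=e_3+\lambda e_4$.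
   Context: An almost abelian Lie algebra is a real Lie algebra with an abelian ideal of codimension one. An LCS structure on $\mathfrak g$ is a pair $(\omega,\theta)$ with $\omega\in\Lambda^2\mathfrak g^*$ non-degenerate and $\theta\in\mathfrak g^*$ closed and nonzero, such that $d\omega=\theta\wedge\omega$ ($d$ the Chevalley–Eilenberg differential). *)

theory Defs
  imports "HOL-Analysis.Analysis"
begin

definition lie_algebra :: "('a::real_vector \<Rightarrow> 'a \<Rightarrow> 'a) \<Rightarrow> bool" where
  "lie_algebra B \<longleftrightarrow> bilinear B \<and> (\<forall>x. B x x = 0) \<and>
     (\<forall>x y z. B x (B y z) + B y (B z x) + B z (B x y) = 0)"

definition almost_abelian :: "('a::euclidean_space \<Rightarrow> 'a \<Rightarrow> 'a) \<Rightarrow> bool" where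
  "almost_abelian B \<longleftrightarrow> (\<exists>I. subspace I \<and> dim I = DIM('a) - 1 \<and>
     (\<forall>x\<in>I. \<forall>y. B y x \<in> I) \<and> (\<forall>x\<in>I. \<forall>y\<in>I. B x y = 0))"

definition CE_d2 :: "('a \<Rightarrow> 'a \<Rightarrow> 'a) \<Rightarrow> ('a \<Rightarrow> 'a \<Rightarrow> real) \<Rightarrow> 'a \<Rightarrow> 'a \<Rightarrow> 'a \<Rightarrow> real" where
  "CE_d2 B w x y z = - w (B x y) z + w (B x z) y - w (B y z) x"

definition wedge12 :: "('a \<Rightarrow> real) \<Rightarrow> ('a \<Rightarrow> 'a \<Rightarrow> real) \<Rightarrow> 'a \<Rightarrow> 'a \<Rightarrow> 'a \<Rightarrow> real" where
  "wedge12 t w x y z = t x * w y z - t y * w x z + t z * w x y"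

text \<open>An LCS structure (w, t): w non-degenerate 2-form, t closed nonzero 1-form,
  d w = t \<and> w.  Closedness of t: (d t)(x,y) = - t([x,y]) = 0.\<close>
definition has_LCS :: "('a::real_vector \<Rightarrow> 'a \<Rightarrow> 'a) \<Rightarrow> bool" where
  "has_LCS B \<longleftrightarrow> (\<exists>(w::'a \<Rightarrow> 'a \<Rightarrow> real) (t::'a \<Rightarrow> real).
     bilinear w \<and> (\<forall>x. w x x = 0) \<and> (\<forall>x. (\<forall>y. w x y = 0) \<longrightarrow> x = 0) \<and>
     linear t \<and> (\<forall>x y. t (B x y) = 0) \<and> (\<exists>x. t x \<noteq> 0) \<and>
     (\<forall>x y z. CE_d2 B w x y z = wedge12 t w x y z))"

text \<open>(B is isomorphic to) the almost abelian Lie algebra with basis e1,...,e4 whose only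
  nonzero brackets are [e1,ej] = sum_{k=2..4} A j k ek (j = 2,3,4); i.e. there is a basis
  of 'a realising exactly this bracket table (for i < j; the rest follows by antisymmetry).\<close>
definition is_model :: "('a::real_vector \<Rightarrow> 'a \<Rightarrow> 'a) \<Rightarrow> (nat \<Rightarrow> nat \<Rightarrow> real) \<Rightarrow> bool" where
  "is_model B A \<longleftrightarrow> (\<exists>e::nat \<Rightarrow> 'a.
     inj_on e {1..4} \<and> independent (e ` {1..4}) \<and> span (e ` {1..4}) = UNIV \<and>
     (\<forall>j\<in>{2..4}. B (e 1) (e j) = (\<Sum>k=2..4. A j k *\<^sub>R e k)) \<and>
     (\<forall>i\<in>{2..4}. \<forall>j\<in>{2..4}. i < j \<longrightarrow> B (e i) (e j) = 0))"

text \<open>Matrix of ad(e1) on span(e2,e3,e4): row j-2 lists the coefficients of [e1,ej]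
  on e2, e3, e4.\<close>
definition adm :: "real list list \<Rightarrow> nat \<Rightarrow> nat \<Rightarrow> real" where
  "adm tbl j k = tbl ! (j - 2) ! (k - 2)"

definition h3R :: "nat \<Rightarrow> nat \<Rightarrow> real" where
  "h3R = adm [[0,1,0],[0,0,0],[0,0,0]]"
definition n4 :: "nat \<Rightarrow> nat \<Rightarrow> real" where
  "n4 = adm [[0,1,0],[0,0,1],[0,0,0]]"
definition r3R :: "real \<Rightarrow> nat \<Rightarrow> nat \<Rightarrow> real" where
  "r3R l = adm [[1,0,0],[0,l,0],[0,0,0]]"
definition r4ml :: "real \<Rightarrow> real \<Rightarrow> nat \<Rightarrow> nat \<Rightarrow> real" where
  "r4ml m l = adm [[1,0,0],[0,m,0],[0,0,l]]"
definition r3R' :: "nat \<Rightarrow> nat \<Rightarrow> real" where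
  "r3R' = adm [[1,0,0],[1,1,0],[0,0,0]]"
definition r4l :: "real \<Rightarrow> nat \<Rightarrow> nat \<Rightarrow> real" where
  "r4l l = adm [[1,0,0],[0,l,0],[0,1,l]]"
definition r4 :: "nat \<Rightarrow> nat \<Rightarrow> real" where
  "r4 = adm [[1,0,0],[1,1,0],[0,1,1]]"
definition r3primeR :: "real \<Rightarrow> nat \<Rightarrow> nat \<Rightarrow> real" where
  "r3primeR l = adm [[l,-1,0],[1,l,0],[0,0,0]]"
definition r4prime :: "real \<Rightarrow> real \<Rightarrow> nat \<Rightarrow> nat \<Rightarrow> real" where
  "r4prime m l = adm [[m,0,0],[0,l,-1],[0,1,l]]"

end

(* Let I be the abelian ideal of codimension one and e1 \<notin> I.  The algebra is determined by
   f = ad e1 restricted to I, up to rescaling e1 and changing the basis of I.  Starting from a real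
   eigenvector (the characteristic polynomial is a real cubic), an elementary normal form argument
   shows that either f = 0, or some multiple of f has one of the nine tables of the theorem, or it
   has the table of r'_{4,m,0} with m \<noteq> 0.  The first and last cases carry no LCS structure:
   if all brackets vanish then d\<omega> = 0 forces \<theta> \<and> \<omega> = 0, so \<omega> has a radical; for r'_{4,m,0} the
   operator f is invertible, so \<theta> vanishes on I = [e1, I], and the LCS equation then makes the
   three-dimensional space I isotropic for the symplectic form \<omega> on a four-dimensional space. *)

theory Submission
  imports Defs
begin

section \<open>Normal forms of endomorphisms of a three-dimensional space\<close>

lemma cubic_lower_terms_less:
  fixes p q r x :: real
  assumes "x = 1 + \<bar>p\<bar> + \<bar>q\<bar> + \<bar>r\<bar>"
  shows "\<bar>p*x^2 + q*x + r\<bar> < x^3"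
proof -
  have x1: "1 \<le> x" using assms by simp
  have x2: "x \<le> x^2" using mult_left_mono[OF x1, of x] x1 by (simp add: power2_eq_square)
  have x3: "1 \<le> x^2" using x1 x2 by linarith
  have "\<bar>p*x^2 + q*x + r\<bar> \<le> \<bar>p*x^2\<bar> + \<bar>q*x\<bar> + \<bar>r\<bar>"
    by (meson abs_triangle_ineq add_mono order_trans order_refl)
  also have "\<dots> = \<bar>p\<bar>*x^2 + \<bar>q\<bar>*x + \<bar>r\<bar>"
    using x1 by (simp add: abs_mult)
  also have "\<dots> \<le> (\<bar>p\<bar> + \<bar>q\<bar> + \<bar>r\<bar>) * x^2"
    using mult_left_mono[OF x2, of "\<bar>q\<bar>"] mult_left_mono[OF x3, of "\<bar>r\<bar>"]
    by (simp add: distrib_right)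
  also have "\<dots> < x * x^2"
    using assms x3 by (intro mult_strict_right_mono) auto
  finally show ?thesis by (simp add: power3_eq_cube power2_eq_square)
qed

lemma monic_cubic_has_real_root:
  fixes p q r :: real
  obtains a where "a^3 + p*a^2 + q*a + r = 0"
proof -
  define x where "x = 1 + \<bar>p\<bar> + \<bar>q\<bar> + \<bar>r\<bar>"
  define g where "g a = a^3 + p*a^2 + q*a + r" for a
  have "g x > 0"
    using cubic_lower_terms_less[OF x_def] unfolding g_def by linarith
  moreover have "g (-x) < 0"
  proof -
    have "g (-x) = (p*x^2 + (-q)*x + r) - x^3" unfolding g_def by (simp add: power3_eq_cube power2_eq_square)
    moreover have "\<bar>p*x^2 + (-q)*x + r\<bar> < x^3"
      by (rule cubic_lower_terms_less) (simp add: x_def)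
    ultimately show ?thesis by linarith
  qed
  moreover have "continuous_on {-x..x} g" unfolding g_def by (intro continuous_intros)
  ultimately obtain a where "g a = 0" using IVT'[of g "-x" 0 x] by (force simp: x_def)
  then show ?thesis using that unfolding g_def by blast
qed

lemma matrix3_has_real_eigenvector:
  fixes M :: "real^3^3"
  obtains a x where "x \<noteq> 0" "M *v x = a *\<^sub>R x"
proof -
  define p where "p = -(M$1$1 + M$2$2 + M$3$3)"
  define q where "q = M$1$1*M$2$2 + M$1$1*M$3$3 + M$2$2*M$3$3 - M$1$2*M$2$1 - M$1$3*M$3$1 - M$2$3*M$3$2"
  obtain a where "a^3 + p*a^2 + q*a + (- det M) = 0" by (rule monic_cubic_has_real_root)
  then have "det (M - a *\<^sub>R mat 1) = 0"
    unfolding p_def q_def by (simp add: det_3 mat_def power3_eq_cube power2_eq_square algebra_simps)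
  then have "\<not> (\<forall>x. (M - a *\<^sub>R mat 1) *v x = 0 \<longrightarrow> x = 0)"
    by (metis invertible_det_nz invertible_left_inverse matrix_left_invertible_ker)
  then obtain x where "x \<noteq> 0" "(M - a *\<^sub>R mat 1) *v x = 0" by blast
  moreover have "(a *\<^sub>R mat 1) *v x = a *\<^sub>R x"
    by (simp add: vec_eq_iff matrix_vector_mult_def mat_def sum_3 forall_3)
  ultimately show ?thesis
    using that by (simp add: matrix_vector_mult_diff_rdistrib)
qed

lemma in_span3E:
  fixes a b c :: "'b::real_vector"
  assumes "x \<in> span {a,b,c}"
  obtains p q r where "x = p *\<^sub>R a + q *\<^sub>R b + r *\<^sub>R c"
proof -
  from assms obtain p where "x - p *\<^sub>R a \<in> span {b,c}" by (auto simp: span_insert)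
  then obtain q where "x - p *\<^sub>R a - q *\<^sub>R b \<in> span {c}" by (auto simp: span_insert)
  then obtain r where "x - p *\<^sub>R a - q *\<^sub>R b = r *\<^sub>R c" by (auto simp: span_singleton)
  then show ?thesis using that[of p q r] by (simp add: algebra_simps)
qed

lemma linear_lincomb3:
  fixes f :: "'b::real_vector \<Rightarrow> 'b"
  assumes "linear f"
    and "f a = m11 *\<^sub>R a + m21 *\<^sub>R b + m31 *\<^sub>R c"
    and "f b = m12 *\<^sub>R a + m22 *\<^sub>R b + m32 *\<^sub>R c"
    and "f c = m13 *\<^sub>R a + m23 *\<^sub>R b + m33 *\<^sub>R c"
  shows "f (p1 *\<^sub>R a + p2 *\<^sub>R b + p3 *\<^sub>R c) =
    (m11*p1 + m12*p2 + m13*p3) *\<^sub>R a + (m21*p1 + m22*p2 + m23*p3) *\<^sub>R b +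
    (m31*p1 + m32*p2 + m33*p3) *\<^sub>R c"
  using assms by (simp add: linear_add linear_scale algebra_simps)

lemma lincomb3_eqI:
  fixes a b c :: "'b::real_vector"
  shows "p1 = q1 \<Longrightarrow> p2 = q2 \<Longrightarrow> p3 = q3 \<Longrightarrow>
    p1 *\<^sub>R a + p2 *\<^sub>R b + p3 *\<^sub>R c = q1 *\<^sub>R a + q2 *\<^sub>R b + q3 *\<^sub>R c"
  by simp

lemma scaleR_lincomb3:
  fixes a b c :: "'b::real_vector"
  shows "k *\<^sub>R (p1 *\<^sub>R a + p2 *\<^sub>R b + p3 *\<^sub>R c) = (k*p1) *\<^sub>R a + (k*p2) *\<^sub>R b + (k*p3) *\<^sub>R c"
  by (simp add: algebra_simps)

lemma span_triangular:
  fixes a b c :: "'b::real_vector"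
  assumes "k1 \<noteq> 0" "k2 \<noteq> 0" "k3 \<noteq> 0"
  shows "span {k1 *\<^sub>R a + 0 *\<^sub>R b + 0 *\<^sub>R c, p *\<^sub>R a + k2 *\<^sub>R b + 0 *\<^sub>R c, q *\<^sub>R a + r *\<^sub>R b + k3 *\<^sub>R c}
    = span {a,b,c}"
    (is "span {?A, ?B, ?C} = _")
proof -
  let ?T = "span {?A, ?B, ?C}"
  have gens: "?A \<in> ?T" "?B \<in> ?T" "?C \<in> ?T" by (auto intro: span_base)
  have "a = (1/k1) *\<^sub>R ?A" using assms by simp
  then have a: "a \<in> ?T" by (metis gens(1) span_scale)
  have "b = (1/k2) *\<^sub>R (?B - p *\<^sub>R a)" using assms by (simp add: algebra_simps)
  then have b: "b \<in> ?T" by (metis gens(2) a span_scale span_diff)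
  have "c = (1/k3) *\<^sub>R (?C - q *\<^sub>R a - r *\<^sub>R b)" using assms by (simp add: algebra_simps)
  then have "c \<in> ?T" by (metis gens(3) a b span_scale span_diff)
  with a b have "{a,b,c} \<subseteq> ?T" by blast
  moreover have "{?A, ?B, ?C} \<subseteq> span {a,b,c}"
    by (simp add: span_add span_scale span_base)
  ultimately show ?thesis by (simp add: span_eq)
qed

lemma invariant_span3_eigenvector_coords:
  fixes f :: "'b::real_vector \<Rightarrow> 'b"
  assumes "linear f" and S: "S = span {b1,b2,b3}" and inv: "f ` S \<subseteq> S"
  obtains a x1 x2 x3 where "x1 \<noteq> 0 \<or> x2 \<noteq> 0 \<or> x3 \<noteq> 0"
    "f (x1 *\<^sub>R b1 + x2 *\<^sub>R b2 + x3 *\<^sub>R b3) = a *\<^sub>R (x1 *\<^sub>R b1 + x2 *\<^sub>R b2 + x3 *\<^sub>R b3)"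
proof -
  have "b1 \<in> S" "b2 \<in> S" "b3 \<in> S" unfolding S by (simp_all add: span_base)
  with inv have fb: "f b1 \<in> S" "f b2 \<in> S" "f b3 \<in> S" by auto
  obtain m11 m21 m31 where f1: "f b1 = m11 *\<^sub>R b1 + m21 *\<^sub>R b2 + m31 *\<^sub>R b3"
    using fb S by (auto elim: in_span3E)
  obtain m12 m22 m32 where f2: "f b2 = m12 *\<^sub>R b1 + m22 *\<^sub>R b2 + m32 *\<^sub>R b3"
    using fb S by (auto elim: in_span3E)
  obtain m13 m23 m33 where f3: "f b3 = m13 *\<^sub>R b1 + m23 *\<^sub>R b2 + m33 *\<^sub>R b3"
    using fb S by (auto elim: in_span3E)
  define M :: "real^3^3"
    where "M = vector [vector [m11,m12,m13], vector [m21,m22,m23], vector [m31,m32,m33]]"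
  obtain a x where x: "x \<noteq> 0" "M *v x = a *\<^sub>R x" by (rule matrix3_has_real_eigenvector)
  have "(M *v x) $ i = a * x $ i" for i using x(2) by simp
  from this[of 1] this[of 2] this[of 3] have coords: "m11 * x$1 + m12 * x$2 + m13 * x$3 = a * x$1"
    "m21 * x$1 + m22 * x$2 + m23 * x$3 = a * x$2"
    "m31 * x$1 + m32 * x$2 + m33 * x$3 = a * x$3"
    by (simp_all add: M_def matrix_vector_mult_def sum_3)
  have "f (x$1 *\<^sub>R b1 + x$2 *\<^sub>R b2 + x$3 *\<^sub>R b3) = a *\<^sub>R (x$1 *\<^sub>R b1 + x$2 *\<^sub>R b2 + x$3 *\<^sub>R b3)"
    unfolding linear_lincomb3[OF assms(1) f1 f2 f3] scaleR_lincomb3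
    by (rule lincomb3_eqI) (fact coords)+
  moreover have "x$1 \<noteq> 0 \<or> x$2 \<noteq> 0 \<or> x$3 \<noteq> 0" using x(1) by (auto simp: vec_eq_iff forall_3)
  ultimately show ?thesis using that by blast
qed

lemma invariant_span3_eigenvector:
  fixes f :: "'b::real_vector \<Rightarrow> 'b"
  assumes "linear f" and S: "S = span {b1,b2,b3}" and inv: "f ` S \<subseteq> S"
  obtains a v w1 w2 where "f v = a *\<^sub>R v" "S = span {v,w1,w2}"
proof -
  obtain a x1 x2 x3 where x: "x1 \<noteq> 0 \<or> x2 \<noteq> 0 \<or> x3 \<noteq> 0"
    and fv: "f (x1 *\<^sub>R b1 + x2 *\<^sub>R b2 + x3 *\<^sub>R b3) = a *\<^sub>R (x1 *\<^sub>R b1 + x2 *\<^sub>R b2 + x3 *\<^sub>R b3)"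
    using invariant_span3_eigenvector_coords[OF assms] .
  define v where "v = x1 *\<^sub>R b1 + x2 *\<^sub>R b2 + x3 *\<^sub>R b3"
  from x consider "x1 \<noteq> 0" | "x2 \<noteq> 0" | "x3 \<noteq> 0" by blast
  then have "S = span {v, b2, b3} \<or> S = span {v, b1, b3} \<or> S = span {v, b1, b2}"
  proof cases
    case 1
    then show ?thesis
      using span_triangular[of 1 1 x1 b2 b3 b1 0 x2 x3] unfolding S v_def
      by (simp add: insert_commute add_ac)
  next
    case 2
    then show ?thesis
      using span_triangular[of 1 1 x2 b1 b3 b2 0 x1 x3] unfolding S v_def
      by (simp add: insert_commute add_ac)
  next
    case 3
    then show ?thesis
      using span_triangular[of 1 1 x3 b1 b2 b3 0 x1 x2] unfolding S v_def
      by (simp add: insert_commute)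
  qed
  then show ?thesis using that fv unfolding v_def[symmetric] by blast
qed

text \<open>The rows are numbered 2..4 as in the tables of the statement.  The vectors are only required
  to span S; when S is three-dimensional they form a basis, by counting dimensions.\<close>

definition has_scaled_matrix ::
    "('b::real_vector \<Rightarrow> 'b) \<Rightarrow> 'b set \<Rightarrow> real \<Rightarrow> 'b \<Rightarrow> 'b \<Rightarrow> 'b \<Rightarrow> (nat \<Rightarrow> nat \<Rightarrow> real) \<Rightarrow> bool"
  where "has_scaled_matrix f S c u2 u3 u4 A \<longleftrightarrow> c \<noteq> 0 \<and> S = span {u2,u3,u4} \<and>
    c *\<^sub>R f u2 = A 2 2 *\<^sub>R u2 + A 2 3 *\<^sub>R u3 + A 2 4 *\<^sub>R u4 \<and>
    c *\<^sub>R f u3 = A 3 2 *\<^sub>R u2 + A 3 3 *\<^sub>R u3 + A 3 4 *\<^sub>R u4 \<and>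
    c *\<^sub>R f u4 = A 4 2 *\<^sub>R u2 + A 4 3 *\<^sub>R u3 + A 4 4 *\<^sub>R u4"

definition lcs_table :: "(nat \<Rightarrow> nat \<Rightarrow> real) \<Rightarrow> bool" where
  "lcs_table A \<longleftrightarrow> A = h3R \<or> A = n4 \<or> (\<exists>l. A = r3R l) \<or> (\<exists>m l. m * l \<noteq> 0 \<and> A = r4ml m l) \<or>
    A = r3R' \<or> (\<exists>l. A = r4l l) \<or> A = r4 \<or> (\<exists>l. A = r3primeR l) \<or>
    (\<exists>m l. m \<noteq> 0 \<and> l \<noteq> 0 \<and> A = r4prime m l)"

text \<open>Up to scaling and change of basis, every nonzero endomorphism of a three-dimensional real
  space has one of these tables; the tables r4prime m 0 are the ones missing from the theorem.\<close>

definition normal_table :: "(nat \<Rightarrow> nat \<Rightarrow> real) \<Rightarrow> bool" where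
  "normal_table A \<longleftrightarrow> lcs_table A \<or> (\<exists>m. m \<noteq> 0 \<and> A = r4prime m 0)"

definition has_normal_form :: "('b::real_vector \<Rightarrow> 'b) \<Rightarrow> 'b set \<Rightarrow> bool" where
  "has_normal_form f S \<longleftrightarrow> (\<exists>c u2 u3 u4 A. normal_table A \<and> has_scaled_matrix f S c u2 u3 u4 A)"

lemma normal_tables:
  "normal_table h3R" "normal_table n4" "normal_table (r3R l)" "m * l \<noteq> 0 \<Longrightarrow> normal_table (r4ml m l)"
  "normal_table r3R'" "normal_table (r4l l)" "normal_table r4" "normal_table (r3primeR l)"
  "m \<noteq> 0 \<Longrightarrow> normal_table (r4prime m l)"
  unfolding normal_table_def lcs_table_def by auto (cases "l = 0"; auto)

lemma has_normal_formI:
  "has_scaled_matrix f S c u2 u3 u4 A \<Longrightarrow> normal_table A \<Longrightarrow> has_normal_form f S"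
  unfolding has_normal_form_def by blast

lemmas table_defs = adm_def h3R_def n4_def r3R_def r4ml_def r3R'_def r4l_def r4_def r3primeR_def r4prime_def

lemma diagonal_normal_form:
  fixes f :: "'b::real_vector \<Rightarrow> 'b"
  assumes "f u1 = l1 *\<^sub>R u1" "f u2 = l2 *\<^sub>R u2" "f u3 = l3 *\<^sub>R u3" "S = span {u1,u2,u3}" "l1 \<noteq> 0"
  shows "has_normal_form f S"
proof -
  consider "l2 = 0" "l3 = 0" | "l2 = 0" "l3 \<noteq> 0" | "l2 \<noteq> 0" "l3 = 0" | "l2 \<noteq> 0" "l3 \<noteq> 0" by blast
  then show ?thesis
  proof cases
    case 1
    then have "has_scaled_matrix f S (1/l1) u1 u2 u3 (r3R 0)"
      using assms unfolding has_scaled_matrix_def by (simp add: table_defs)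
    then show ?thesis by (rule has_normal_formI) (rule normal_tables)
  next
    case 2
    then have "has_scaled_matrix f S (1/l1) u1 u3 u2 (r3R (l3/l1))"
      using assms unfolding has_scaled_matrix_def by (simp add: table_defs insert_commute)
    then show ?thesis by (rule has_normal_formI) (rule normal_tables)
  next
    case 3
    then have "has_scaled_matrix f S (1/l1) u1 u2 u3 (r3R (l2/l1))"
      using assms unfolding has_scaled_matrix_def by (simp add: table_defs)
    then show ?thesis by (rule has_normal_formI) (rule normal_tables)
  next
    case 4
    then have "has_scaled_matrix f S (1/l1) u1 u2 u3 (r4ml (l2/l1) (l3/l1))"
      using assms unfolding has_scaled_matrix_def by (simp add: table_defs)
    then show ?thesis by (rule has_normal_formI) (use 4 assms(5) in \<open>simp add: normal_tables\<close>)
  qed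
qed

lemma diagonalizable_normal_form:
  fixes f :: "'b::real_vector \<Rightarrow> 'b"
  assumes "linear f" and "f u1 = l1 *\<^sub>R u1" "f u2 = l2 *\<^sub>R u2" "f u3 = l3 *\<^sub>R u3"
    and S: "S = span {u1,u2,u3}"
  shows "(\<forall>x\<in>S. f x = 0) \<or> has_normal_form f S"
proof -
  consider "l1 \<noteq> 0" | "l2 \<noteq> 0" | "l3 \<noteq> 0" | "l1 = 0" "l2 = 0" "l3 = 0" by blast
  then show ?thesis
  proof cases
    case 1
    then show ?thesis using diagonal_normal_form assms by blast
  next
    case 2
    have "S = span {u2,u1,u3}" using S by (simp add: insert_commute)
    then show ?thesis using diagonal_normal_form[of f u2 l2 u1 l1 u3 l3 S] assms 2 by blast
  next
    case 3
    have "S = span {u3,u1,u2}" using S by (simp add: insert_commute)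
    then show ?thesis using diagonal_normal_form[of f u3 l3 u1 l1 u2 l2 S] assms 3 by blast
  next
    case 4
    have "f x = 0" if "x \<in> S" for x
    proof -
      from that obtain p q r where "x = p *\<^sub>R u1 + q *\<^sub>R u2 + r *\<^sub>R u3"
        unfolding S by (rule in_span3E)
      then show ?thesis using 4 assms(1-4) by (simp add: linear_add linear_scale)
    qed
    then show ?thesis by blast
  qed
qed

lemma jordan2_normal_form:
  fixes f :: "'b::real_vector \<Rightarrow> 'b"
  assumes "linear f" and "f y = l *\<^sub>R y" "f z = l *\<^sub>R z + y" "f x = k *\<^sub>R x" "S = span {y,z,x}"
  shows "has_normal_form f S"
proof -
  consider "k \<noteq> 0" | "k = 0" "l \<noteq> 0" | "k = 0" "l = 0" by blast
  then show ?thesis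
  proof cases
    case 1
    have "S = span {x, (1/k) *\<^sub>R y, z}"
      using assms(5) span_triangular[of 1 "1/k" 1 x y z 0 0 0] 1 by (simp add: insert_commute)
    with 1 have "has_scaled_matrix f S (1/k) x ((1/k) *\<^sub>R y) z (r4l (l/k))"
      using assms(1-4) unfolding has_scaled_matrix_def
      by (simp add: table_defs linear_scale scaleR_add_right)
    then show ?thesis by (rule has_normal_formI) (rule normal_tables)
  next
    case 2
    have "S = span {(1/l) *\<^sub>R y, z, x}"
      using assms(5) span_triangular[of "1/l" 1 1 y z x 0 0 0] 2 by simp
    with 2 have "has_scaled_matrix f S (1/l) ((1/l) *\<^sub>R y) z x r3R'"
      using assms(1-4) unfolding has_scaled_matrix_def
      by (simp add: table_defs linear_scale scaleR_add_right)
    then show ?thesis by (rule has_normal_formI) (rule normal_tables)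
  next
    case 3
    have "S = span {z,y,x}" using assms(5) by (simp add: insert_commute)
    with 3 have "has_scaled_matrix f S 1 z y x h3R"
      using assms(2-4) unfolding has_scaled_matrix_def by (simp add: table_defs)
    then show ?thesis by (rule has_normal_formI) (rule normal_tables)
  qed
qed

lemma jordan3_normal_form:
  fixes f :: "'b::real_vector \<Rightarrow> 'b"
  assumes "linear f" and "f x1 = l *\<^sub>R x1" "f x2 = l *\<^sub>R x2 + x1" "f x3 = l *\<^sub>R x3 + x2"
    and "S = span {x1,x2,x3}"
  shows "has_normal_form f S"
proof (cases "l = 0")
  case False
  have "S = span {(1/(l*l)) *\<^sub>R x1, (1/l) *\<^sub>R x2, x3}"
    using assms(5) span_triangular[of "1/(l*l)" "1/l" 1 x1 x2 x3 0 0 0] False by simp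
  with False have "has_scaled_matrix f S (1/l) ((1/(l*l)) *\<^sub>R x1) ((1/l) *\<^sub>R x2) x3 r4"
    using assms(1-4) unfolding has_scaled_matrix_def
    by (simp add: table_defs linear_scale scaleR_add_right add.commute)
  then show ?thesis by (rule has_normal_formI) (rule normal_tables)
next
  case True
  have "S = span {x3,x2,x1}" using assms(5) by (simp add: insert_commute)
  with True have "has_scaled_matrix f S 1 x3 x2 x1 n4"
    using assms(2-4) unfolding has_scaled_matrix_def by (simp add: table_defs)
  then show ?thesis by (rule has_normal_formI) (rule normal_tables)
qed

lemma rotation_normal_form:
  fixes f :: "'b::real_vector \<Rightarrow> 'b"
  assumes "f v = a *\<^sub>R v" "f u1 = l *\<^sub>R u1 - b *\<^sub>R u2" "f u2 = b *\<^sub>R u1 + l *\<^sub>R u2"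
    and "S = span {v,u1,u2}" "b \<noteq> 0"
  shows "has_normal_form f S"
proof (cases "a = 0")
  case True
  have "S = span {u1,u2,v}" using assms(4) by (simp add: insert_commute)
  with True have "has_scaled_matrix f S (1/b) u1 u2 v (r3primeR (l/b))"
    using assms unfolding has_scaled_matrix_def
    by (simp add: table_defs scaleR_diff_right scaleR_add_right)
  then show ?thesis by (rule has_normal_formI) (rule normal_tables)
next
  case False
  have "has_scaled_matrix f S (1/b) v u1 u2 (r4prime (a/b) (l/b))"
    using assms unfolding has_scaled_matrix_def
    by (simp add: table_defs scaleR_diff_right scaleR_add_right)
  then show ?thesis by (rule has_normal_formI) (use False assms(5) in \<open>simp add: normal_tables\<close>)
qed

lemma repeated_eigenvalue_normal_form:
  fixes f :: "'b::real_vector \<Rightarrow> 'b"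
  assumes lf: "linear f" and fv: "f v = a *\<^sub>R v" and fy: "f y = b *\<^sub>R y"
    and fz: "f z = a *\<^sub>R z + d *\<^sub>R y + e *\<^sub>R v" and S: "S = span {v,y,z}" and "a \<noteq> b"
  shows "(\<forall>x\<in>S. f x = 0) \<or> has_normal_form f S"
proof -
  have F: "f (p1 *\<^sub>R v + p2 *\<^sub>R y + p3 *\<^sub>R z) =
      (a*p1 + 0*p2 + e*p3) *\<^sub>R v + (0*p1 + b*p2 + d*p3) *\<^sub>R y + (0*p1 + 0*p2 + a*p3) *\<^sub>R z"
    for p1 p2 p3 by (rule linear_lincomb3[OF lf]) (simp_all add: fv fy fz)
  define s where "s = d/(a-b)"
  define z' where "z' = 0 *\<^sub>R v + s *\<^sub>R y + 1 *\<^sub>R z"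
  have "f z' = (a*0 + e) *\<^sub>R v + (a * s) *\<^sub>R y + (a*1) *\<^sub>R z"
    unfolding z'_def F by (rule lincomb3_eqI) (use \<open>a \<noteq> b\<close> in \<open>simp_all add: s_def field_simps\<close>)
  then have fz': "f z' = a *\<^sub>R z' + e *\<^sub>R v" unfolding z'_def by (simp add: algebra_simps)
  show ?thesis
  proof (cases "e = 0")
    case True
    have "S = span {v, y, z'}"
      using span_triangular[of 1 1 1 v y z 0 0 s] unfolding S z'_def by simp
    with True fz' show ?thesis using diagonalizable_normal_form[OF lf fv fy] by simp
  next
    case False
    have "S = span {e *\<^sub>R v, z', y}"
      using span_triangular[of e 1 1 v y z 0 0 s] False unfolding S z'_def
      by (simp add: insert_commute)
    moreover have "f (e *\<^sub>R v) = a *\<^sub>R (e *\<^sub>R v)" using fv lf by (simp add: linear_scale)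
    ultimately show ?thesis using jordan2_normal_form[OF lf _ fz' fy] by blast
  qed
qed

lemma scalar_triangular_normal_form:
  fixes f :: "'b::real_vector \<Rightarrow> 'b"
  assumes lf: "linear f" and fv: "f v = a *\<^sub>R v" and fy: "f y = a *\<^sub>R y"
    and fz: "f z = a *\<^sub>R z + d *\<^sub>R y + e *\<^sub>R v" and S: "S = span {v,y,z}"
  shows "(\<forall>x\<in>S. f x = 0) \<or> has_normal_form f S"
proof -
  consider "d = 0" "e = 0" | "d \<noteq> 0" | "d = 0" "e \<noteq> 0" by blast
  then show ?thesis
  proof cases
    case 1
    with fz have "f z = a *\<^sub>R z" by simp
    then show ?thesis by (rule diagonalizable_normal_form[OF lf fv fy _ S])
  next
    case 2
    define x where "x = e *\<^sub>R v + d *\<^sub>R y + 0 *\<^sub>R z"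
    have fx: "f x = a *\<^sub>R x" unfolding x_def using lf fv fy by (simp add: linear_add linear_scale algebra_simps)
    have "S = span {v, x, z}"
      using span_triangular[of 1 d 1 v y z e 0 0] 2 unfolding S x_def by simp
    then have "S = span {x, z, v}" by (simp add: insert_commute)
    moreover have "f z = a *\<^sub>R z + x" unfolding x_def fz by (simp add: algebra_simps)
    ultimately show ?thesis using jordan2_normal_form[OF lf fx _ fv] by blast
  next
    case 3
    have "S = span {e *\<^sub>R v, z, y}"
      using span_triangular[of e 1 1 v y z 0 0 0] 3 unfolding S by (simp add: insert_commute)
    moreover have "f (e *\<^sub>R v) = a *\<^sub>R (e *\<^sub>R v)" using fv lf by (simp add: linear_scale)
    moreover have "f z = a *\<^sub>R z + e *\<^sub>R v" using fz 3 by simp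
    ultimately show ?thesis using jordan2_normal_form[OF lf _ _ fy] by blast
  qed
qed

lemma two_eigenvectors_normal_form:
  fixes f :: "'b::real_vector \<Rightarrow> 'b"
  assumes lf: "linear f" and fv: "f v = a *\<^sub>R v" and fy: "f y = b *\<^sub>R y"
    and fz: "f z = c *\<^sub>R z + d *\<^sub>R y + e *\<^sub>R v" and S: "S = span {v,y,z}"
  shows "(\<forall>x\<in>S. f x = 0) \<or> has_normal_form f S"
proof -
  consider "c \<noteq> a" "c \<noteq> b" | "c = a" "a \<noteq> b" | "c = b" "a \<noteq> b" | "c = a" "a = b" by blast
  then show ?thesis
  proof cases
    case 1
    have F: "f (p1 *\<^sub>R v + p2 *\<^sub>R y + p3 *\<^sub>R z) =
        (a*p1 + 0*p2 + e*p3) *\<^sub>R v + (0*p1 + b*p2 + d*p3) *\<^sub>R y + (0*p1 + 0*p2 + c*p3) *\<^sub>R z"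
      for p1 p2 p3 by (rule linear_lincomb3[OF lf]) (simp_all add: fv fy fz)
    define z' where "z' = (e/(c-a)) *\<^sub>R v + (d/(c-b)) *\<^sub>R y + 1 *\<^sub>R z"
    have "f z' = c *\<^sub>R z'"
      unfolding z'_def F scaleR_lincomb3 by (rule lincomb3_eqI) (use 1 in \<open>simp_all add: field_simps\<close>)
    moreover have "S = span {v, y, z'}"
      using span_triangular[of 1 1 1 v y z 0 "e/(c-a)" "d/(c-b)"] unfolding S z'_def by simp
    ultimately show ?thesis using diagonalizable_normal_form[OF lf fv fy] by blast
  next
    case 2
    then show ?thesis using repeated_eigenvalue_normal_form[OF lf fv fy _ S] fz by blast
  next
    case 3
    have "S = span {y,v,z}" using S by (simp add: insert_commute)
    moreover have "f z = b *\<^sub>R z + e *\<^sub>R v + d *\<^sub>R y" using fz 3 by (simp add: algebra_simps)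
    ultimately show ?thesis using repeated_eigenvalue_normal_form[OF lf fy fv] 3 by blast
  next
    case 4
    with fy fz have "f y = a *\<^sub>R y" "f z = a *\<^sub>R z + d *\<^sub>R y + e *\<^sub>R v" by simp_all
    then show ?thesis by (rule scalar_triangular_normal_form[OF lf fv _ _ S])
  qed
qed

lemma jordan_block_triangular_normal_form:
  fixes f :: "'b::real_vector \<Rightarrow> 'b"
  assumes lf: "linear f" and fv: "f v = a *\<^sub>R v" and fy: "f y = a *\<^sub>R y + g *\<^sub>R v"
    and fz: "f z = c *\<^sub>R z + d *\<^sub>R y + e *\<^sub>R v" and S: "S = span {v,y,z}" and g: "g \<noteq> 0"
  shows "has_normal_form f S"
proof -
  have F: "f (p1 *\<^sub>R v + p2 *\<^sub>R y + p3 *\<^sub>R z) =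
      (a*p1 + g*p2 + e*p3) *\<^sub>R v + (0*p1 + a*p2 + d*p3) *\<^sub>R y + (0*p1 + 0*p2 + c*p3) *\<^sub>R z"
    for p1 p2 p3 by (rule linear_lincomb3[OF lf]) (simp_all add: fv fy fz)
  have fgv: "f (g *\<^sub>R v) = a *\<^sub>R (g *\<^sub>R v)" using fv lf by (simp add: linear_scale)
  consider "c \<noteq> a" | "c = a" "d \<noteq> 0" | "c = a" "d = 0" by blast
  then show ?thesis
  proof cases
    case 1
    define s where "s = d/(c-a)"
    define r where "r = (g * s + e)/(c-a)"
    have s: "s * (c - a) = d" and r: "r * (c - a) = g * s + e" using 1 by (simp_all add: s_def r_def)
    define z' where "z' = r *\<^sub>R v + s *\<^sub>R y + 1 *\<^sub>R z"
    have "f z' = c *\<^sub>R z'"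
      unfolding z'_def F scaleR_lincomb3 by (rule lincomb3_eqI) (use r s in \<open>algebra, algebra, simp\<close>)
    moreover have "S = span {g *\<^sub>R v, y, z'}"
      using span_triangular[of g 1 1 v y z 0 r s] g unfolding S z'_def by simp
    ultimately show ?thesis using jordan2_normal_form[OF lf fgv] fy by blast
  next
    case 2
    define x1 where "x1 = (d * g) *\<^sub>R v + 0 *\<^sub>R y + 0 *\<^sub>R z"
    define x2 where "x2 = e *\<^sub>R v + d *\<^sub>R y + 0 *\<^sub>R z"
    have "f x1 = a *\<^sub>R x1" unfolding x1_def F scaleR_lincomb3 by (rule lincomb3_eqI) simp_all
    moreover have "f x2 = a *\<^sub>R x2 + x1"
      unfolding x1_def x2_def F by (simp add: algebra_simps)
    moreover have "f z = a *\<^sub>R z + x2" unfolding x2_def fz 2 by (simp add: algebra_simps)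
    moreover have "S = span {x1, x2, z}"
      using span_triangular[of "d * g" d 1 v y z e 0 0] 2 g unfolding S x1_def x2_def by simp
    ultimately show ?thesis by (rule jordan3_normal_form[OF lf])
  next
    case 3
    define z' where "z' = 0 *\<^sub>R v + (-e/g) *\<^sub>R y + 1 *\<^sub>R z"
    have "f z' = a *\<^sub>R z'"
      unfolding z'_def F scaleR_lincomb3 by (rule lincomb3_eqI) (use 3 g in \<open>simp_all add: field_simps\<close>)
    moreover have "S = span {g *\<^sub>R v, y, z'}"
      using span_triangular[of g 1 1 v y z 0 0 "-e/g"] g unfolding S z'_def by simp
    ultimately show ?thesis using jordan2_normal_form[OF lf fgv] fy by blast
  qed
qed

lemma triangular_normal_form:
  fixes f :: "'b::real_vector \<Rightarrow> 'b"
  assumes lf: "linear f" and fv: "f v = a *\<^sub>R v" and fy: "f y = b *\<^sub>R y + g *\<^sub>R v"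
    and fz: "f z = c *\<^sub>R z + d *\<^sub>R y + e *\<^sub>R v" and S: "S = span {v,y,z}"
  shows "(\<forall>x\<in>S. f x = 0) \<or> has_normal_form f S"
proof -
  consider "b \<noteq> a" | "b = a" "g = 0" | "b = a" "g \<noteq> 0" by blast
  then show ?thesis
  proof cases
    case 1
    define t where "t = g/(b-a)"
    define y' where "y' = t *\<^sub>R v + 1 *\<^sub>R y + 0 *\<^sub>R z"
    have F: "f (p1 *\<^sub>R v + p2 *\<^sub>R y + p3 *\<^sub>R z) =
        (a*p1 + g*p2 + e*p3) *\<^sub>R v + (0*p1 + b*p2 + d*p3) *\<^sub>R y + (0*p1 + 0*p2 + c*p3) *\<^sub>R z"
      for p1 p2 p3 by (rule linear_lincomb3[OF lf]) (simp_all add: fv fy fz)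
    have "f y' = b *\<^sub>R y'"
      unfolding y'_def F scaleR_lincomb3 by (rule lincomb3_eqI) (use 1 in \<open>simp_all add: t_def field_simps\<close>)
    moreover have "f z = c *\<^sub>R z + d *\<^sub>R y' + (e - d * t) *\<^sub>R v"
      unfolding y'_def fz by (simp add: algebra_simps)
    moreover have "S = span {v, y', z}"
      using span_triangular[of 1 1 1 v y z t 0 0] unfolding S y'_def by simp
    ultimately show ?thesis using two_eigenvectors_normal_form[OF lf fv] by blast
  next
    case 2
    with fy have "f y = b *\<^sub>R y" by simp
    then show ?thesis by (rule two_eigenvectors_normal_form[OF lf fv _ fz S])
  next
    case 3
    with fy have "f y = a *\<^sub>R y + g *\<^sub>R v" by simp
    then show ?thesis using jordan_block_triangular_normal_form[OF lf fv _ fz S] 3 by blast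
  qed
qed

lemma invariant_complement:
  fixes f :: "'b::real_vector \<Rightarrow> 'b"
  assumes lf: "linear f" and fv: "f v = a *\<^sub>R v"
    and f1: "f w1 = al1 *\<^sub>R v + p *\<^sub>R w1 + r *\<^sub>R w2"
    and f2: "f w2 = al2 *\<^sub>R v + q *\<^sub>R w1 + s *\<^sub>R w2"
    and D: "(a - p) * (a - s) - q * r \<noteq> 0"
  obtains w1' w2' where "f w1' = p *\<^sub>R w1' + r *\<^sub>R w2'" "f w2' = q *\<^sub>R w1' + s *\<^sub>R w2'"
    "span {v, w1', w2'} = span {v, w1, w2}"
proof -
  have F: "f (p1 *\<^sub>R v + p2 *\<^sub>R w1 + p3 *\<^sub>R w2) =
      (a*p1 + al1*p2 + al2*p3) *\<^sub>R v + (0*p1 + p*p2 + q*p3) *\<^sub>R w1 + (0*p1 + r*p2 + s*p3) *\<^sub>R w2"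
    for p1 p2 p3 by (rule linear_lincomb3[OF lf]) (simp_all add: fv f1 f2)
  define D0 where "D0 = (a - p) * (a - s) - q * r"
  define b1 where "b1 = (-al1 * (a - s) - r * al2) / D0"
  define b2 where "b2 = (-(a - p) * al2 - q * al1) / D0"
  have "D0 * b1 = -al1 * (a - s) - r * al2" "D0 * b2 = -(a - p) * al2 - q * al1"
    using D by (simp_all add: D0_def b1_def b2_def)
  then have "D0 * (a * b1 + al1) = D0 * (p * b1 + r * b2)" "D0 * (a * b2 + al2) = D0 * (q * b1 + s * b2)"
    unfolding D0_def by algebra+
  then have b: "a * b1 + al1 = p * b1 + r * b2" "a * b2 + al2 = q * b1 + s * b2"
    using D by (simp_all add: D0_def)
  define w1' where "w1' = b1 *\<^sub>R v + 1 *\<^sub>R w1 + 0 *\<^sub>R w2"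
  define w2' where "w2' = b2 *\<^sub>R v + 0 *\<^sub>R w1 + 1 *\<^sub>R w2"
  have "f w1' = p *\<^sub>R w1' + r *\<^sub>R w2'"
    unfolding w1'_def w2'_def F using b(1) by (simp add: algebra_simps)
  moreover have "f w2' = q *\<^sub>R w1' + s *\<^sub>R w2'"
    unfolding w1'_def w2'_def F using b(2) by (simp add: algebra_simps)
  moreover have "span {v, w1', w2'} = span {v, w1, w2}"
    using span_triangular[of 1 1 1 v w1 w2 b1 b2 0] unfolding w1'_def w2'_def by simp
  ultimately show ?thesis by (rule that)
qed

lemma complex_block_rotation:
  fixes f :: "'b::real_vector \<Rightarrow> 'b"
  assumes lf: "linear f"
    and f1: "f w1 = p *\<^sub>R w1 + r *\<^sub>R w2" and f2: "f w2 = q *\<^sub>R w1 + s *\<^sub>R w2"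
    and Dl: "(p - s)^2 + 4 * q * r < 0"
  obtains l b u1 u2 where "b \<noteq> 0" "f u1 = l *\<^sub>R u1 - b *\<^sub>R u2" "f u2 = b *\<^sub>R u1 + l *\<^sub>R u2"
    "span {u1, u2} = span {w1, w2}"
proof -
  define l where "l = (p + s) / 2"
  define b where "b = sqrt (-((p - s)^2 + 4 * q * r)) / 2"
  have "b > 0" using Dl by (simp add: b_def)
  have b2: "4 * b^2 = -((p - s)^2 + 4 * q * r)" using Dl by (simp add: b_def power_divide)
  have "r \<noteq> 0" using Dl zero_le_power2[of "p - s"] by auto
  define k1 where "k1 = (l - p) / b"
  define k2 where "k2 = -r / b"
  have k: "b * k1 = l - p" "b * k2 = -r" using \<open>b > 0\<close> by (simp_all add: k1_def k2_def)
  have "k2 \<noteq> 0" using \<open>r \<noteq> 0\<close> \<open>b > 0\<close> by (simp add: k2_def)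
  have "2 * l = p + s" by (simp add: l_def)
  then have "b * (p * k1 + q * k2) = b * (b + l * k1)" "b * (r * k1 + s * k2) = b * (l * k2)"
    using k b2 by algebra+
  then have c: "p * k1 + q * k2 = b + l * k1" "r * k1 + s * k2 = l * k2"
    using \<open>b > 0\<close> by simp_all
  define u2 where "u2 = k1 *\<^sub>R w1 + k2 *\<^sub>R w2"
  have "f u2 = (p * k1 + q * k2) *\<^sub>R w1 + (r * k1 + s * k2) *\<^sub>R w2"
    unfolding u2_def using lf by (simp add: f1 f2 linear_add linear_scale algebra_simps)
  then have fu2: "f u2 = b *\<^sub>R w1 + l *\<^sub>R u2"
    unfolding c u2_def by (simp add: algebra_simps)
  have "l *\<^sub>R w1 - b *\<^sub>R u2 = (l - b * k1) *\<^sub>R w1 + (- (b * k2)) *\<^sub>R w2"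
    unfolding u2_def by (simp add: algebra_simps)
  then have "f w1 = l *\<^sub>R w1 - b *\<^sub>R u2" using k f1 by simp
  moreover note fu2
  moreover have "span {w1, u2} = span {w1, w2}"
  proof -
    have "w2 = (1 / k2) *\<^sub>R (u2 - k1 *\<^sub>R w1)" using \<open>k2 \<noteq> 0\<close> by (simp add: u2_def)
    then have "w2 \<in> span {w1, u2}" by (metis insertI1 insertI2 span_base span_diff span_scale)
    moreover have "u2 \<in> span {w1, w2}" unfolding u2_def by (simp add: span_add span_scale span_base)
    ultimately show ?thesis by (simp add: span_eq span_base)
  qed
  ultimately show ?thesis using that[of b w1 l u2] \<open>b > 0\<close> by simp
qed

lemma real_block_normal_form:
  fixes f :: "'b::real_vector \<Rightarrow> 'b"
  assumes lf: "linear f" and fv: "f v = a *\<^sub>R v"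
    and f1: "f w1 = al1 *\<^sub>R v + p *\<^sub>R w1 + r *\<^sub>R w2"
    and f2: "f w2 = al2 *\<^sub>R v + q *\<^sub>R w1 + s *\<^sub>R w2"
    and S: "S = span {v,w1,w2}" and Dl: "0 \<le> (p - s)^2 + 4 * q * r"
  shows "(\<forall>x\<in>S. f x = 0) \<or> has_normal_form f S"
proof (cases "r = 0")
  case True
  have "f w1 = p *\<^sub>R w1 + al1 *\<^sub>R v" "f w2 = s *\<^sub>R w2 + q *\<^sub>R w1 + al2 *\<^sub>R v"
    using f1 f2 True by (simp_all add: algebra_simps)
  then show ?thesis using triangular_normal_form[OF lf fv _ _ S] by blast
next
  case False
  have F: "f (p1 *\<^sub>R v + p2 *\<^sub>R w1 + p3 *\<^sub>R w2) =
      (a*p1 + al1*p2 + al2*p3) *\<^sub>R v + (0*p1 + p*p2 + q*p3) *\<^sub>R w1 + (0*p1 + r*p2 + s*p3) *\<^sub>R w2"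
    for p1 p2 p3 by (rule linear_lincomb3[OF lf]) (simp_all add: fv f1 f2)
  define d where "d = sqrt ((p - s)^2 + 4 * q * r)"
  define mu where "mu = (p + s + d) / 2"
  have "2 * mu - p - s = d" by (simp add: mu_def field_simps)
  then have "(2 * mu - p - s)^2 = (p - s)^2 + 4 * q * r" using Dl by (simp add: d_def)
  moreover have "4 * (mu * mu - (p + s) * mu + p * s - q * r) = (2 * mu - p - s)^2 - ((p - s)^2 + 4 * q * r)"
    by (simp add: power2_eq_square algebra_simps)
  ultimately have mu: "mu * mu - (p + s) * mu + p * s - q * r = 0" by simp
  define y where "y = 0 *\<^sub>R v + (mu - s) *\<^sub>R w1 + r *\<^sub>R w2"
  have "f y = (al1 * (mu - s) + al2 * r) *\<^sub>R v + (mu * (mu - s)) *\<^sub>R w1 + (mu * r) *\<^sub>R w2"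
    unfolding y_def F by (rule lincomb3_eqI) (use mu in \<open>simp_all add: algebra_simps\<close>)
  then have "f y = mu *\<^sub>R y + (al1 * (mu - s) + al2 * r) *\<^sub>R v"
    unfolding y_def by (simp add: algebra_simps)
  moreover have "f w1 = (p + s - mu) *\<^sub>R w1 + 1 *\<^sub>R y + al1 *\<^sub>R v"
    unfolding y_def f1 by (simp add: algebra_simps)
  moreover have "S = span {v, y, w1}"
    using span_triangular[of 1 1 r v w1 w2 0 0 "mu - s"] False unfolding S y_def
    by (simp add: insert_commute)
  ultimately show ?thesis using triangular_normal_form[OF lf fv] by blast
qed

lemma complex_block_normal_form:
  fixes f :: "'b::real_vector \<Rightarrow> 'b"
  assumes lf: "linear f" and fv: "f v = a *\<^sub>R v"
    and f1: "f w1 = al1 *\<^sub>R v + p *\<^sub>R w1 + r *\<^sub>R w2"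
    and f2: "f w2 = al2 *\<^sub>R v + q *\<^sub>R w1 + s *\<^sub>R w2"
    and S: "S = span {v,w1,w2}" and Dl: "(p - s)^2 + 4 * q * r < 0"
  shows "has_normal_form f S"
proof -
  have "4 * ((a - p) * (a - s) - q * r) = (2 * a - p - s)^2 - ((p - s)^2 + 4 * q * r)"
    by (simp add: power2_eq_square algebra_simps)
  also have "\<dots> > 0" using Dl zero_le_power2[of "2 * a - p - s"] by linarith
  finally have "(a - p) * (a - s) - q * r \<noteq> 0" by simp
  then obtain w1' w2' where f1': "f w1' = p *\<^sub>R w1' + r *\<^sub>R w2'" and f2': "f w2' = q *\<^sub>R w1' + s *\<^sub>R w2'"
    and S': "span {v, w1', w2'} = span {v, w1, w2}"
    by (rule invariant_complement[OF lf fv f1 f2])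
  obtain l b u1 u2 where "b \<noteq> 0" "f u1 = l *\<^sub>R u1 - b *\<^sub>R u2" "f u2 = b *\<^sub>R u1 + l *\<^sub>R u2"
    and U: "span {u1, u2} = span {w1', w2'}"
    by (rule complex_block_rotation[OF lf f1' f2' Dl])
  moreover have "S = span {v, u1, u2}"
    unfolding S S'[symmetric] by (simp only: span_insert[of v] U)
  ultimately show ?thesis using rotation_normal_form[of f v a u1 l b u2 S] fv by blast
qed

lemma invariant_span3_normal_form:
  fixes f :: "'b::real_vector \<Rightarrow> 'b"
  assumes lf: "linear f" and S: "S = span {b1,b2,b3}" and inv: "f ` S \<subseteq> S"
  shows "(\<forall>x\<in>S. f x = 0) \<or> has_normal_form f S"
proof -
  obtain a v w1 w2 where fv: "f v = a *\<^sub>R v" and S': "S = span {v,w1,w2}"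
    using invariant_span3_eigenvector[OF lf S inv] .
  have "w1 \<in> S" "w2 \<in> S" unfolding S' by (simp_all add: span_base)
  then have "f w1 \<in> span {v,w1,w2}" "f w2 \<in> span {v,w1,w2}" using inv unfolding S' by auto
  then obtain al1 p r al2 q s where
    "f w1 = al1 *\<^sub>R v + p *\<^sub>R w1 + r *\<^sub>R w2" "f w2 = al2 *\<^sub>R v + q *\<^sub>R w1 + s *\<^sub>R w2"
    by (auto elim!: in_span3E)
  then show ?thesis
    using real_block_normal_form[OF lf fv _ _ S'] complex_block_normal_form[OF lf fv _ _ S']
    by (meson not_less)
qed

section \<open>Almost abelian Lie algebras with an LCS structure\<close>

lemma bilinear_alternating_antisym:
  assumes "bilinear w" and "\<forall>x. w x x = 0"
  shows "w x y = - w y x"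
proof -
  have "w (x + y) (x + y) = w x x + w x y + (w y x + w y y)"
    using assms(1) by (simp add: bilinear_ladd bilinear_radd)
  then show ?thesis using assms(2) by (simp add: eq_neg_iff_add_eq_0)
qed

lemma span_insert_eq_UNIV_if_codim1:
  fixes e :: "'a::euclidean_space"
  assumes "subspace I" and "dim I = DIM('a) - 1" and "e \<notin> I"
  shows "span (insert e I) = UNIV"
proof -
  have "e \<notin> span I" using assms(1,3) by (metis span_eq_iff)
  then have "dim (insert e I) = DIM('a)" using assms(2) by (simp add: dim_insert)
  then show ?thesis using dim_eq_full by blast
qed

lemma almost_abelian_obtain_ideal:
  fixes B :: "'a::euclidean_space \<Rightarrow> 'a \<Rightarrow> 'a"
  assumes "almost_abelian B"
  obtains I e1 where "subspace I" "dim I = DIM('a) - 1" "e1 \<notin> I"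
    "B e1 ` I \<subseteq> I" "\<forall>x\<in>I. \<forall>y\<in>I. B x y = 0"
proof -
  obtain I where I: "subspace I" "dim I = DIM('a) - 1" and inv: "\<forall>x\<in>I. \<forall>y. B y x \<in> I"
    and ab: "\<forall>x\<in>I. \<forall>y\<in>I. B x y = 0"
    using assms unfolding almost_abelian_def by blast
  have "I \<noteq> UNIV"
  proof
    assume "I = UNIV"
    then have "DIM('a) = DIM('a) - 1" using I(2) by simp
    then show False using DIM_positive[where 'a='a] by linarith
  qed
  then obtain e1 where "e1 \<notin> I" by blast
  moreover have "B e1 ` I \<subseteq> I" using inv by blast
  ultimately show ?thesis using that I ab by blast
qed

lemma subspace_dim3_obtain_span3:
  assumes "subspace I" "dim I = 3"
  obtains b1 b2 b3 where "I = span {b1,b2,b3}"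
proof -
  obtain Bs where "Bs \<subseteq> I" "I \<subseteq> span Bs" "card Bs = 3"
    using basis_exists[of I] assms(2) by metis
  moreover from \<open>card Bs = 3\<close> obtain b1 b2 b3 where "Bs = {b1,b2,b3}" by (metis card_3_iff)
  ultimately have "I = span {b1,b2,b3}" using span_minimal[OF _ assms(1)] by (metis subset_antisym)
  then show ?thesis by (rule that)
qed

definition adapted_basis :: "real \<Rightarrow> 'a \<Rightarrow> 'a \<Rightarrow> 'a \<Rightarrow> 'a \<Rightarrow> nat \<Rightarrow> 'a::real_vector" where
  "adapted_basis c e1 u2 u3 u4 i =
    (if i = 1 then c *\<^sub>R e1 else if i = 2 then u2 else if i = 3 then u3 else u4)"

lemma adapted_basis_image: "adapted_basis c e1 u2 u3 u4 ` {1..4} = {c *\<^sub>R e1, u2, u3, u4}"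
proof -
  have "{1..4::nat} = {1,2,3,4}" by auto
  then show ?thesis by (auto simp: adapted_basis_def)
qed

lemma adapted_basis_is_basis:
  fixes e1 :: "'a::euclidean_space"
  assumes D: "DIM('a) = 4" and I: "subspace I" "dim I = 3" "e1 \<notin> I"
    and "c \<noteq> 0" and "I = span {u2,u3,u4}"
  defines "e \<equiv> adapted_basis c e1 u2 u3 u4"
  shows "inj_on e {1..4}" "independent (e ` {1..4})" "span (e ` {1..4}) = UNIV"
proof -
  have "e1 = (1/c) *\<^sub>R (c *\<^sub>R e1)" using \<open>c \<noteq> 0\<close> by simp
  then have "e1 \<in> span (e ` {1..4})"
    unfolding e_def adapted_basis_image by (metis insertI1 span_base span_scale)
  moreover have "I \<subseteq> span (e ` {1..4})"
    unfolding e_def adapted_basis_image \<open>I = span {u2,u3,u4}\<close> by (rule span_mono) auto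
  ultimately have "span (insert e1 I) \<subseteq> span (e ` {1..4})" by (simp add: span_minimal)
  then show span: "span (e ` {1..4}) = UNIV"
    using span_insert_eq_UNIV_if_codim1[of I e1] I D by auto
  have "DIM('a) \<le> card (e ` {1..4})" using dim_le_card[of UNIV "e ` {1..4}"] span by simp
  moreover have "card (e ` {1..4}) \<le> 4" using card_image_le[of "{1..4::nat}" e] by simp
  ultimately have card: "card (e ` {1..4}) = 4" using D by simp
  then show "inj_on e {1..4}" using inj_on_iff_eq_card[of "{1..4::nat}" e] by simp
  show "independent (e ` {1..4})" using card_eq_dim[of "e ` {1..4}" UNIV] card span D by simp
qed

lemma is_model_if_scaled_matrix:
  fixes B :: "'a::euclidean_space \<Rightarrow> 'a \<Rightarrow> 'a"
  assumes D: "DIM('a) = 4" and I: "subspace I" "dim I = 3" "e1 \<notin> I"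
    and "bilinear B" and ab: "\<forall>x\<in>I. \<forall>y\<in>I. B x y = 0"
    and A: "has_scaled_matrix (B e1) I c u2 u3 u4 A"
  shows "is_model B A"
proof -
  let ?e = "adapted_basis c e1 u2 u3 u4"
  from A have "c \<noteq> 0" and "I = span {u2,u3,u4}" unfolding has_scaled_matrix_def by auto
  note basis = adapted_basis_is_basis[OF D I this]
  have sum: "(\<Sum>k=2..4. g k) = g 2 + g 3 + g (4::nat)" for g :: "nat \<Rightarrow> 'a"
    by (simp add: numeral_eq_Suc)
  have "{2..4::nat} = {2,3,4}" by auto
  then have "B (?e 1) (?e j) = (\<Sum>k=2..4. A j k *\<^sub>R ?e k)" if "j \<in> {2..4}" for j
    using that A \<open>bilinear B\<close> unfolding sum
    by (auto simp: has_scaled_matrix_def adapted_basis_def bilinear_lmul)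
  moreover have "?e i \<in> I" if "i \<in> {2..4}" for i
    using that \<open>I = span {u2,u3,u4}\<close> by (auto simp: adapted_basis_def span_base)
  ultimately show ?thesis unfolding is_model_def using basis ab by blast
qed

lemma no_LCS_if_abelian:
  fixes B :: "'a::euclidean_space \<Rightarrow> 'a \<Rightarrow> 'a"
  assumes "2 < DIM('a)" and "\<forall>x y. B x y = 0"
  shows "\<not> has_LCS B"
proof
  assume "has_LCS B"
  then obtain w :: "'a \<Rightarrow> 'a \<Rightarrow> real" and t x0 where bw: "bilinear w"
    and nd: "\<forall>x. (\<forall>y. w x y = 0) \<longrightarrow> x = 0" and lt: "linear t" and tx0: "t x0 \<noteq> 0"
    and ce: "\<forall>x y z. CE_d2 B w x y z = wedge12 t w x y z"
    unfolding has_LCS_def by blast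
  have wedge0: "wedge12 t w x y z = 0" for x y z
    using ce assms(2) by (simp add: CE_d2_def bilinear_lzero[OF bw])
  define L where "L v = (t v, w x0 v)" for v
  have "linear L"
    unfolding L_def using lt bw by (intro linearI) (simp_all add: linear_add linear_scale bilinear_radd bilinear_rmul)
  moreover have "\<not> inj L"
  proof
    assume "inj L"
    then have "dim (range L) = DIM('a)"
      using dim_image_eq[OF \<open>linear L\<close>, of UNIV] by (simp add: inj_on_def)
    moreover have "dim (range L) \<le> DIM(real \<times> real)" by (rule dim_subset_UNIV)
    ultimately show False using assms(1) by simp
  qed
  ultimately obtain v where "v \<noteq> 0" "L v = 0" using linear_inj_iff_eq_0 by blast
  then have "t v = 0" "w x0 v = 0" by (simp_all add: L_def zero_prod_def)
  then have "\<forall>y. w v y = 0" using wedge0[of x0 v] tx0 by (simp add: wedge12_def)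
  then show False using nd \<open>v \<noteq> 0\<close> by blast
qed

lemma bracket_eq_0_if_ad_vanishes:
  fixes B :: "'a::euclidean_space \<Rightarrow> 'a \<Rightarrow> 'a"
  assumes I: "subspace I" "dim I = DIM('a) - 1" "e1 \<notin> I"
    and bl: "bilinear B" and alt: "\<forall>x. B x x = 0" and ab: "\<forall>x\<in>I. \<forall>y\<in>I. B x y = 0"
    and ad: "\<forall>x\<in>I. B e1 x = 0"
  shows "B x y = 0"
proof -
  have decomp: "\<exists>k i. i \<in> I \<and> z = k *\<^sub>R e1 + i" for z
  proof -
    have "z \<in> span (insert e1 I)" using span_insert_eq_UNIV_if_codim1[OF I] by simp
    moreover have "span I = I" using I(1) by (simp add: span_eq_iff)
    ultimately obtain k where "z - k *\<^sub>R e1 \<in> I" by (auto simp: span_insert)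
    then show ?thesis by (metis add.commute diff_add_cancel)
  qed
  obtain k i k' i' where "i \<in> I" "i' \<in> I" and xy: "x = k *\<^sub>R e1 + i" "y = k' *\<^sub>R e1 + i'"
    using decomp by meson
  then have "B e1 i = 0" "B e1 i' = 0" "B i e1 = 0" "B i i' = 0"
    using ad ab bilinear_alternating_antisym[OF bl alt, of i e1] by auto
  then show ?thesis
    unfolding xy using alt bl by (simp add: bilinear_ladd bilinear_radd bilinear_lmul bilinear_rmul)
qed

lemma LCS_ad_skew:
  assumes bw: "bilinear w" and alt: "\<forall>x. w x x = 0"
    and ce: "CE_d2 B w E x y = wedge12 t w E x y" and "t x = 0" "t y = 0" "B x y = 0"
  shows "w (B E x) y + w x (B E y) = - t E * w x y"
  using ce assms(4-6) bilinear_alternating_antisym[OF bw alt, of "B E y" x]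
  by (simp add: CE_d2_def wedge12_def bilinear_lzero[OF bw])

lemma nondegenerate_eq_0_if_orthogonal_to_spanning:
  assumes "bilinear w" and nd: "\<forall>x. (\<forall>y. w x y = 0) \<longrightarrow> x = 0"
    and "span T = UNIV" and "\<forall>b\<in>T. w x b = 0"
  shows "x = 0"
proof -
  have "linear (w x)" using assms(1) by (simp add: bilinear_def)
  then have "w x y = 0" for y using assms(3,4) linear_eq_0_on_span[of "w x" T y] by simp
  then show ?thesis using nd by blast
qed

lemma nondegenerate_no_isotropic_triple:
  fixes w :: "'a::real_vector \<Rightarrow> 'a \<Rightarrow> real"
  assumes bw: "bilinear w" and alt: "\<forall>x. w x x = 0" and nd: "\<forall>x. (\<forall>y. w x y = 0) \<longrightarrow> x = 0"
    and ind: "independent {E,u2,u3,u4}" and span: "span {E,u2,u3,u4} = UNIV" and "u2 \<noteq> u3"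
    and w: "w u2 u3 = 0" "w u2 u4 = 0" "w u3 u4 = 0"
  shows False
proof -
  note orth = nondegenerate_eq_0_if_orthogonal_to_spanning[OF bw nd span]
  have "w u3 u2 = 0" using bilinear_alternating_antisym[OF bw alt, of u3 u2] w by simp
  have "u2 \<noteq> 0" using ind dependent_zero[of "{E,u2,u3,u4}"] by auto
  then have "w u2 E \<noteq> 0" using orth[of u2] alt w by auto
  define x where "x = w u3 E *\<^sub>R u2 - w u2 E *\<^sub>R u3"
  have "w x y = w u3 E * w u2 y - w u2 E * w u3 y" for y
    unfolding x_def using bw by (simp add: bilinear_lsub bilinear_lmul)
  then have "x = 0" using orth[of x] alt w \<open>w u3 u2 = 0\<close> by auto
  then have "w u3 E *\<^sub>R u2 = w u2 E *\<^sub>R u3" by (simp add: x_def)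
  then have "(1 / w u2 E) *\<^sub>R (w u3 E *\<^sub>R u2) = u3" using \<open>w u2 E \<noteq> 0\<close> by simp
  then have u3: "(w u3 E / w u2 E) *\<^sub>R u2 = u3" by simp
  have "u2 \<in> span ({E,u2,u3,u4} - {u3})" using \<open>u2 \<noteq> u3\<close> by (intro span_base) blast
  then have "u3 \<in> span ({E,u2,u3,u4} - {u3})" by (metis span_scale u3)
  then show False using ind unfolding dependent_def by blast
qed

lemma LCS_isotropic_if_r4prime_0:
  assumes bw: "bilinear w" and alt: "\<forall>x. w x x = 0"
    and ce: "\<forall>x y z. CE_d2 B w x y z = wedge12 t w x y z"
    and "t E \<noteq> 0" and t0: "t u2 = 0" "t u3 = 0" "t u4 = 0"
    and ad: "B E u2 = m *\<^sub>R u2" "B E u3 = - u4" "B E u4 = u3"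
    and B0: "B u2 u3 = 0" "B u2 u4 = 0" "B u3 u4 = 0"
  shows "w u2 u3 = 0" "w u2 u4 = 0" "w u3 u4 = 0"
proof -
  have skew: "w (B E x) y + w x (B E y) = - t E * w x y"
    if "x \<in> {u2,u3,u4}" "y \<in> {u2,u3,u4}" "B x y = 0" for x y
    using LCS_ad_skew[OF bw alt, of B E x y t] ce that t0 by auto
  have w2: "\<And>k x y. w (k *\<^sub>R x) y = k * w x y" "\<And>x y. w x (- y) = - w x y"
    using bw by (simp_all add: bilinear_lmul bilinear_rneg)
  have e23: "m * w u2 u3 - w u2 u4 = - t E * w u2 u3"
    using skew[of u2 u3] B0 by (simp add: ad w2)
  have e24: "m * w u2 u4 + w u2 u3 = - t E * w u2 u4"
    using skew[of u2 u4] B0 by (simp add: ad w2)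
  have "- w u4 u4 + w u3 u3 = - t E * w u3 u4"
    using skew[of u3 u4] B0 by (simp add: ad w2 bilinear_lneg[OF bw])
  then show "w u3 u4 = 0" using alt \<open>t E \<noteq> 0\<close> by simp
  have "w u2 u3 * (1 + (t E + m)^2) = 0" using e23 e24 by algebra
  moreover have "1 + (t E + m)^2 > 0" by (simp add: add_pos_nonneg)
  ultimately show "w u2 u3 = 0" by simp
  with e23 show "w u2 u4 = 0" by simp
qed

lemma no_LCS_if_r4prime_0:
  fixes B :: "'a::euclidean_space \<Rightarrow> 'a \<Rightarrow> 'a"
  assumes D: "DIM('a) = 4" and I: "subspace I" "dim I = 3" "e1 \<notin> I"
    and bl: "bilinear B" and ab: "\<forall>x\<in>I. \<forall>y\<in>I. B x y = 0"
    and A: "has_scaled_matrix (B e1) I c u2 u3 u4 (r4prime m 0)" and "m \<noteq> 0"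
  shows "\<not> has_LCS B"
proof
  assume "has_LCS B"
  then obtain w :: "'a \<Rightarrow> 'a \<Rightarrow> real" and t where bw: "bilinear w" and alt: "\<forall>x. w x x = 0"
    and nd: "\<forall>x. (\<forall>y. w x y = 0) \<longrightarrow> x = 0" and lt: "linear t" and tB: "\<forall>x y. t (B x y) = 0"
    and "\<exists>x. t x \<noteq> 0" and ce: "\<forall>x y z. CE_d2 B w x y z = wedge12 t w x y z"
    unfolding has_LCS_def by blast
  define E where "E = c *\<^sub>R e1"
  from A have "c \<noteq> 0" and Ieq: "I = span {u2,u3,u4}"
    and "c *\<^sub>R B e1 u2 = m *\<^sub>R u2" "c *\<^sub>R B e1 u3 = - u4" "c *\<^sub>R B e1 u4 = u3"
    unfolding has_scaled_matrix_def by (auto simp: table_defs)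
  then have ad: "B E u2 = m *\<^sub>R u2" "B E u3 = - u4" "B E u4 = u3"
    using bl by (simp_all add: E_def bilinear_lmul)
  note basis = adapted_basis_is_basis[OF D I \<open>c \<noteq> 0\<close> Ieq]
  have ind: "independent {E,u2,u3,u4}" and span: "span {E,u2,u3,u4} = UNIV"
    using basis(2,3) unfolding adapted_basis_image E_def by auto
  have "u2 \<noteq> u3"
    using inj_onD[OF basis(1), of 2 3] by (auto simp: adapted_basis_def)
  have "u2 \<in> I" "u3 \<in> I" "u4 \<in> I" unfolding Ieq by (simp_all add: span_base)
  then have B0: "B u2 u3 = 0" "B u2 u4 = 0" "B u3 u4 = 0" using ab by auto
  have "t (B E u2) = 0" "t (B E u3) = 0" "t (B E u4) = 0" using tB by blast+
  then have t0: "t u2 = 0" "t u3 = 0" "t u4 = 0"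
    using \<open>m \<noteq> 0\<close> lt by (auto simp: ad linear_scale linear_neg)
  have "t E \<noteq> 0"
  proof
    assume "t E = 0"
    then have "t y = 0" for y using t0 span linear_eq_0_on_span[OF lt, of "{E,u2,u3,u4}" y] by auto
    then show False using \<open>\<exists>x. t x \<noteq> 0\<close> by blast
  qed
  from LCS_isotropic_if_r4prime_0[OF bw alt ce this t0 ad B0]
  show False using nondegenerate_no_isotropic_triple[OF bw alt nd ind span \<open>u2 \<noteq> u3\<close>] by blast
qed

theorem theorem4p5:
  fixes B :: "'a::euclidean_space \<Rightarrow> 'a \<Rightarrow> 'a"
  assumes "DIM('a) = 4"
    and "lie_algebra B"
    and "almost_abelian B"
    and "has_LCS B"
  shows "is_model B h3R \<or>
         is_model B n4 \<or>
         (\<exists>l. is_model B (r3R l)) \<or>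
         (\<exists>m l. m * l \<noteq> 0 \<and> is_model B (r4ml m l)) \<or>
         is_model B r3R' \<or>
         (\<exists>l. is_model B (r4l l)) \<or>
         is_model B r4 \<or>
         (\<exists>l. is_model B (r3primeR l)) \<or>
         (\<exists>m l. m \<noteq> 0 \<and> l \<noteq> 0 \<and> is_model B (r4prime m l))"
proof -
  obtain I e1 where I: "subspace I" "dim I = DIM('a) - 1" "e1 \<notin> I"
    and inv: "B e1 ` I \<subseteq> I" and ab: "\<forall>x\<in>I. \<forall>y\<in>I. B x y = 0"
    using almost_abelian_obtain_ideal[OF assms(3)] .
  have dI: "dim I = 3" using I(2) assms(1) by simp
  obtain b1 b2 b3 where span: "I = span {b1,b2,b3}" using subspace_dim3_obtain_span3[OF I(1) dI] .
  have bl: "bilinear B" and alt: "\<forall>x. B x x = 0" using assms(2) unfolding lie_algebra_def by auto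
  then have "linear (B e1)" by (simp add: bilinear_def)
  from invariant_span3_normal_form[OF this span inv]
  consider "\<forall>x\<in>I. B e1 x = 0" | "has_normal_form (B e1) I" by blast
  then show ?thesis
  proof cases
    case 1
    then have "\<forall>x y. B x y = 0" using bracket_eq_0_if_ad_vanishes[OF I bl alt ab] by blast
    then show ?thesis using no_LCS_if_abelian[of B] assms(1,4) by simp
  next
    case 2
    then obtain c u2 u3 u4 A where A: "has_scaled_matrix (B e1) I c u2 u3 u4 A"
      and "lcs_table A \<or> (\<exists>m. m \<noteq> 0 \<and> A = r4prime m 0)"
      unfolding has_normal_form_def normal_table_def by blast
    moreover have "\<not> (\<exists>m. m \<noteq> 0 \<and> A = r4prime m 0)"
      using no_LCS_if_r4prime_0[OF assms(1) I(1) dI I(3) bl ab] A assms(4) by blast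
    moreover have "is_model B A" by (rule is_model_if_scaled_matrix[OF assms(1) I(1) dI I(3) bl ab A])
    ultimately show ?thesis unfolding lcs_table_def by (elim disjE exE conjE) auto
  qed
qed

end
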